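(* Let $\theta_i>0$, $m_i>0$, $\sigma>0$, $p>0$, $M=\sum_i m_i$, and define $\mathbb F:\mathbb R^N_+\to\mathbb R^N$ by $$\mathbb F(\mathbf y)_i=My_i-\sum_{k=1}^N m_ky_k-\sigma(\theta_i-y_i^p)y_i .$$ If $\mathbf y\in\mathbb R^N_+$ satisfies $\mathbb F(\mathbf y)=0$, then $d_i:=M+\sigma(p+1)y_i^p-\sigma\theta_i>0$ for all $i$, and the Jacobian matrix $D\mathbb F(\mathbf y)=\operatorname{diag}(d_1,\dots,d_N)-\mathbf 1\mathbf m^T$ (where $\mathbf 1=(1,\dots,1)^T$, $\mathbf m=(m_1,\dots,m_N)^T$) has all leading principal minors positive; in particular $\det D\mathbb F(\mathbf y)=\prod_i d_i\,\big(1-\sum_k m_k/d_k\big)>0$.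
   Context: $\mathbb R^N_+$ denotes the set of vectors with all coordinates strictly positive. *)

theory Defs
  imports Complex_Main "Jordan_Normal_Form.Determinant"
begin

(* Vectors in R^N are represented as functions nat => real, only the
   coordinates 0..N-1 are relevant. *)

definition Mtot :: "nat \<Rightarrow> (nat \<Rightarrow> real) \<Rightarrow> real" where
  "Mtot N m = (\<Sum>k<N. m k)"

definition Fmap :: "nat \<Rightarrow> (nat \<Rightarrow> real) \<Rightarrow> (nat \<Rightarrow> real) \<Rightarrow> real \<Rightarrow> real
                     \<Rightarrow> (nat \<Rightarrow> real) \<Rightarrow> nat \<Rightarrow> real" where
  "Fmap N m \<theta> \<sigma> p y i =
     Mtot N m * y i - (\<Sum>k<N. m k * y k) - \<sigma> * (\<theta> i - y i powr p) * y i"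

definition dcoef :: "nat \<Rightarrow> (nat \<Rightarrow> real) \<Rightarrow> (nat \<Rightarrow> real) \<Rightarrow> real \<Rightarrow> real
                     \<Rightarrow> (nat \<Rightarrow> real) \<Rightarrow> nat \<Rightarrow> real" where
  "dcoef N m \<theta> \<sigma> p y i = Mtot N m + \<sigma> * (p + 1) * y i powr p - \<sigma> * \<theta> i"

definition Jmat :: "nat \<Rightarrow> (nat \<Rightarrow> real) \<Rightarrow> (nat \<Rightarrow> real) \<Rightarrow> real \<Rightarrow> real
                     \<Rightarrow> (nat \<Rightarrow> real) \<Rightarrow> real mat" where
  "Jmat N m \<theta> \<sigma> p y =
     mat N N (\<lambda>(i, j). (if i = j then dcoef N m \<theta> \<sigma> p y i else 0) - m j)"

definition lead_sub :: "nat \<Rightarrow> real mat \<Rightarrow> real mat" where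
  "lead_sub k A = mat k k (\<lambda>(i, j). A $$ (i, j))"

end

theory Submission
  imports Defs
begin

text \<open>
  At a zero of \<open>F\<close> every coordinate satisfies \<open>r\<^sub>i y\<^sub>i = \<Sum>\<^sub>k m\<^sub>k y\<^sub>k\<close> with
  \<open>r\<^sub>i = M - \<sigma>\<theta>\<^sub>i + \<sigma>y\<^sub>i\<^sup>p\<close>, so \<open>r\<^sub>i > 0\<close>, and \<open>d\<^sub>i = r\<^sub>i + \<sigma>py\<^sub>i\<^sup>p > r\<^sub>i\<close>.
  Hence \<open>\<Sum>\<^sub>k m\<^sub>k/d\<^sub>k < \<Sum>\<^sub>k m\<^sub>k/r\<^sub>k = \<Sum>\<^sub>k m\<^sub>k y\<^sub>k / \<Sum>\<^sub>k m\<^sub>k y\<^sub>k = 1\<close>.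
  The determinant of \<open>diag(d) - 1m\<^sup>T\<close> is \<open>\<Prod>\<^sub>i d\<^sub>i (1 - \<Sum>\<^sub>k m\<^sub>k/d\<^sub>k)\<close>: subtracting
  the last row from all others and then adding \<open>d\<^sub>n/d\<^sub>k\<close> times column \<open>k\<close> to the
  last column leaves a lower triangular matrix. Leading principal submatrices have
  the same shape with partial sums of \<open>m\<^sub>k/d\<^sub>k\<close>, which are still below \<open>1\<close>.
\<close>

definition last_column_shear :: "nat \<Rightarrow> (nat \<Rightarrow> 'a) \<Rightarrow> 'a::comm_ring_1 mat" where
  "last_column_shear n c = mat n n (\<lambda>(i, j). if i = j then 1 else if j = n - 1 then c i else 0)"

lemma last_column_shear_carrier [simp]: "last_column_shear n c \<in> carrier_mat n n"
  and dim_row_last_column_shear [simp]: "dim_row (last_column_shear n c) = n"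
  and dim_col_last_column_shear [simp]: "dim_col (last_column_shear n c) = n"
  by (simp_all add: last_column_shear_def)

lemma det_last_column_shear [simp]: "det (last_column_shear n c) = 1"
  by (subst det_upper_triangular[of _ n])
     (auto simp: last_column_shear_def upper_triangular_def prod_list_diag_prod)

lemma index_last_column_shear_mult:
  assumes A: "A \<in> carrier_mat n n" and "i < n" "k < n"
  shows "(last_column_shear n c * A) $$ (i, k)
    = A $$ (i, k) + (if i = n - 1 then 0 else c i * A $$ (n - 1, k))"
proof -
  have "(last_column_shear n c * A) $$ (i, k)
      = (\<Sum>r<n. (last_column_shear n c) $$ (i, r) * A $$ (r, k))"
    using assms by (simp add: scalar_prod_def atLeast0LessThan)
  also have "\<dots> = (\<Sum>r<n. (if r = i then A $$ (i, k) else 0)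
      + (if r = n - 1 \<and> i \<noteq> n - 1 then c i * A $$ (n - 1, k) else 0))"
    by (rule sum.cong) (use assms in \<open>auto simp: last_column_shear_def\<close>)
  finally show ?thesis using assms by (simp add: sum.distrib)
qed

lemma index_mult_last_column_shear:
  assumes A: "A \<in> carrier_mat n n" and "i < n" "j < n"
  shows "(A * last_column_shear n c) $$ (i, j)
    = A $$ (i, j) + (if j = n - 1 then \<Sum>r<n - 1. A $$ (i, r) * c r else 0)"
proof -
  have below: "{..<n} = insert (n - 1) {..<n - 1}" using assms by auto
  have "(A * last_column_shear n c) $$ (i, j)
      = (\<Sum>r<n. A $$ (i, r) * (last_column_shear n c) $$ (r, j))"
    using assms by (simp add: scalar_prod_def atLeast0LessThan)
  also have "\<dots> = (\<Sum>r<n. (if r = j then A $$ (i, j) else 0)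
      + (if j = n - 1 \<and> r \<noteq> n - 1 then A $$ (i, r) * c r else 0))"
    by (rule sum.cong) (use assms in \<open>auto simp: last_column_shear_def\<close>)
  finally show ?thesis using assms by (auto simp: sum.distrib below)
qed

definition diag_minus_rank_one :: "nat \<Rightarrow> (nat \<Rightarrow> 'a) \<Rightarrow> (nat \<Rightarrow> 'a) \<Rightarrow> 'a::comm_ring_1 mat" where
  "diag_minus_rank_one n d m = mat n n (\<lambda>(i, j). (if i = j then d i else 0) - m j)"

lemma diag_minus_rank_one_carrier [simp]: "diag_minus_rank_one n d m \<in> carrier_mat n n"
  by (simp add: diag_minus_rank_one_def)

lemma det_diag_minus_rank_one:
  fixes d m :: "nat \<Rightarrow> 'a::field"
  assumes d_nz: "\<forall>i<n. d i \<noteq> 0"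
  shows "det (diag_minus_rank_one n d m) = (\<Prod>i<n. d i) * (1 - (\<Sum>k<n. m k / d k))"
proof (cases n)
  case 0
  then show ?thesis by (simp add: diag_minus_rank_one_def)
next
  case (Suc l)
  have l: "l = n - 1" "l < n" and below_l: "{..<n} = insert l {..<l}" using Suc by auto
  define A where "A = diag_minus_rank_one n d m"
  define B where "B = last_column_shear n (\<lambda>_. -1) * A"
  define P where "P = B * last_column_shear n (\<lambda>r. d l / d r)"
  have A: "A \<in> carrier_mat n n" and B: "B \<in> carrier_mat n n" and P: "P \<in> carrier_mat n n"
    unfolding A_def B_def P_def by (auto intro!: mult_carrier_mat)
  have B_index: "B $$ (i, k) = (if i = l then (if k = l then d l else 0) - m k
      else (if i = k then d i else 0) - (if k = l then d l else 0))" if "i < n" "k < n" for i k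
    using that l unfolding B_def index_last_column_shear_mult[OF A that]
    by (auto simp: A_def diag_minus_rank_one_def)
  have B_below_l: "B $$ (i, r) = (if i = r then d i else 0) - (if i = l then m r else 0)"
    if "i < n" "r < l" for i r
    using B_index[of i r] that l by auto
  have P_index: "P $$ (i, j) = B $$ (i, j) + (if j = l then \<Sum>r<l. B $$ (i, r) * (d l / d r) else 0)"
    if "i < n" "j < n" for i j
    using that l unfolding P_def index_mult_last_column_shear[OF B that] by simp
  have P_upper: "P $$ (i, j) = 0" if "i < j" "j < n" for i j
  proof -
    have "(\<Sum>r<l. B $$ (i, r) * (d l / d r)) = (\<Sum>r<l. if r = i then d l else 0)"
      by (rule sum.cong) (use that l d_nz B_below_l in auto)
    then show ?thesis using that l B_index[of i j] P_index[of i j] by auto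
  qed
  have P_diag: "P $$ (i, i) = (if i = l then d l * (1 - (\<Sum>k<n. m k / d k)) else d i)"
    if "i < n" for i
  proof (cases "i = l")
    case True
    have "(\<Sum>r<l. B $$ (i, r) * (d l / d r)) = - d l * (\<Sum>r<l. m r / d r)"
      using True B_below_l l by (simp add: sum_distrib_left sum_negf ac_simps)
    moreover have "d l * (1 - (\<Sum>k<n. m k / d k)) = d l - m l - d l * (\<Sum>r<l. m r / d r)"
      using d_nz l by (simp add: below_l field_simps)
    ultimately show ?thesis using True l B_index[of l l] P_index[of l l] by simp
  next
    case False
    then show ?thesis using that l B_index[of i i] P_index[of i i] by simp
  qed
  have "det A = det P"
    using det_mult[OF B last_column_shear_carrier] det_mult[OF last_column_shear_carrier A]
    by (simp add: B_def P_def)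
  also have "\<dots> = (\<Prod>i<n. P $$ (i, i))"
    using det_lower_triangular[OF P_upper P] P by (simp add: prod_list_diag_prod atLeast0LessThan)
  also have "\<dots> = (\<Prod>i<n. d i) * (1 - (\<Sum>k<n. m k / d k))"
    using l by (simp add: below_l P_diag)
  finally show ?thesis unfolding A_def .
qed

lemma lead_sub_diag_minus_rank_one:
  "k \<le> n \<Longrightarrow> lead_sub k (diag_minus_rank_one n d m) = diag_minus_rank_one k d m"
  by (rule eq_matI) (auto simp: lead_sub_def diag_minus_rank_one_def)

lemma det_diag_minus_rank_one_pos:
  fixes d m :: "nat \<Rightarrow> real"
  assumes "\<forall>i<n. d i > 0" and "(\<Sum>k<n. m k / d k) < 1"
  shows "det (diag_minus_rank_one n d m) > 0"
proof -
  have "(\<Prod>i<n. d i) > 0" by (rule prod_pos) (use assms in auto)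
  moreover have "\<forall>i<n. d i \<noteq> 0" using assms by auto
  ultimately show ?thesis using assms by (simp add: det_diag_minus_rank_one)
qed

lemma leading_minor_diag_minus_rank_one_pos:
  fixes d m :: "nat \<Rightarrow> real"
  assumes d_pos: "\<forall>i<n. d i > 0" and m_nonneg: "\<forall>i<n. m i \<ge> 0"
    and sum_less: "(\<Sum>k<n. m k / d k) < 1" and "k \<le> n"
  shows "det (lead_sub k (diag_minus_rank_one n d m)) > 0"
proof -
  have "(\<Sum>j<k. m j / d j) \<le> (\<Sum>j<n. m j / d j)"
    by (rule sum_mono2) (use \<open>k \<le> n\<close> d_pos m_nonneg in auto)
  then show ?thesis
    using assms by (simp add: lead_sub_diag_minus_rank_one det_diag_minus_rank_one_pos)
qed

definition rate :: "nat \<Rightarrow> (nat \<Rightarrow> real) \<Rightarrow> (nat \<Rightarrow> real) \<Rightarrow> real \<Rightarrow> real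
                     \<Rightarrow> (nat \<Rightarrow> real) \<Rightarrow> nat \<Rightarrow> real" where
  "rate N m \<theta> \<sigma> p y i = Mtot N m - \<sigma> * \<theta> i + \<sigma> * y i powr p"

lemma Fmap_eq_rate: "Fmap N m \<theta> \<sigma> p y i = rate N m \<theta> \<sigma> p y i * y i - (\<Sum>k<N. m k * y k)"
  by (simp add: Fmap_def rate_def algebra_simps)

lemma dcoef_eq_rate: "dcoef N m \<theta> \<sigma> p y i = rate N m \<theta> \<sigma> p y i + \<sigma> * p * y i powr p"
  by (simp add: dcoef_def rate_def algebra_simps)

lemma Jmat_eq_diag_minus_rank_one: "Jmat N m \<theta> \<sigma> p y = diag_minus_rank_one N (dcoef N m \<theta> \<sigma> p y) m"
  by (simp add: Jmat_def diag_minus_rank_one_def)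

lemma rate_pos_at_zero:
  assumes m_pos: "\<forall>i<N. m i > 0" and y_pos: "\<forall>i<N. y i > 0"
    and zero: "Fmap N m \<theta> \<sigma> p y i = 0" and i: "i < N"
  shows "rate N m \<theta> \<sigma> p y i > 0"
proof -
  have "(\<Sum>k<N. m k * y k) > 0" by (rule sum_pos) (use i m_pos y_pos in auto)
  then have "rate N m \<theta> \<sigma> p y i * y i > 0" using zero by (simp add: Fmap_eq_rate)
  then show ?thesis using y_pos[rule_format, OF i] by (simp add: zero_less_mult_iff)
qed

lemma sum_div_dcoef_less_1:
  assumes m_pos: "\<forall>i<N. m i > 0" and "\<sigma> > 0" "p > 0" and y_pos: "\<forall>i<N. y i > 0"
    and zero: "\<forall>i<N. Fmap N m \<theta> \<sigma> p y i = 0"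
  shows "(\<Sum>k<N. m k / dcoef N m \<theta> \<sigma> p y k) < 1"
proof (cases "N = 0")
  case False
  define S where "S = (\<Sum>k<N. m k * y k)"
  have S_pos: "S > 0" unfolding S_def by (rule sum_pos) (use False m_pos y_pos in auto)
  have "(\<Sum>k<N. m k / dcoef N m \<theta> \<sigma> p y k) < (\<Sum>k<N. m k * y k / S)"
  proof (rule sum_strict_mono)
    fix k assume "k \<in> {..<N}"
    then have k: "k < N" by simp
    have r_pos: "rate N m \<theta> \<sigma> p y k > 0" using rate_pos_at_zero assms k by blast
    have "\<sigma> * p * y k powr p > 0" by (intro mult_pos_pos) (use assms k in auto)
    then have "m k / dcoef N m \<theta> \<sigma> p y k < m k / rate N m \<theta> \<sigma> p y k"
      using m_pos k r_pos by (simp add: dcoef_eq_rate frac_less2)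
    also have "\<dots> = m k * y k / S"
    proof -
      have "rate N m \<theta> \<sigma> p y k * y k = S" using zero k by (simp add: Fmap_eq_rate S_def)
      then show ?thesis using r_pos S_pos by (simp add: field_simps)
    qed
    finally show "m k / dcoef N m \<theta> \<sigma> p y k < m k * y k / S" .
  qed (use False in auto)
  also have "\<dots> = 1"
    using S_pos by (simp add: S_def flip: sum_divide_distrib)
  finally show ?thesis .
qed simp

lemma dcoef_pos_at_zero:
  assumes "\<forall>i<N. m i > 0" "\<sigma> > 0" "p > 0" "\<forall>i<N. y i > 0"
    and "Fmap N m \<theta> \<sigma> p y i = 0" and "i < N"
  shows "dcoef N m \<theta> \<sigma> p y i > 0"
proof -
  have "\<sigma> * p * y i powr p > 0" by (intro mult_pos_pos) (use assms in auto)
  then show ?thesis using rate_pos_at_zero[of N m y \<theta> \<sigma> p i] assms by (simp add: dcoef_eq_rate)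
qed

lemma sum_mult_fun_upd:
  fixes m y :: "nat \<Rightarrow> real"
  assumes "j < N"
  shows "(\<Sum>k<N. m k * (y(j := t)) k) = (\<Sum>k<N. m k * y k) + m j * (t - y j)"
proof -
  have "(\<Sum>k<N. m k * (y(j := t)) k)
      = (\<Sum>k<N. m k * y k + (if k = j then m j * (t - y j) else 0))"
    by (rule sum.cong) (auto simp: right_diff_distrib)
  also have "\<dots> = (\<Sum>k<N. m k * y k) + m j * (t - y j)" using assms by (simp add: sum.distrib)
  finally show ?thesis .
qed

lemma has_real_derivative_Fmap_partial:
  assumes y_pos: "y j > 0" and "i < N" and j: "j < N"
  shows "((\<lambda>t. Fmap N m \<theta> \<sigma> p (y(j := t)) i) has_real_derivative
              (Jmat N m \<theta> \<sigma> p y $$ (i, j))) (at (y j))"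
proof (cases "i = j")
  case True
  let ?S = "\<Sum>k<N. m k * y k"
  have "((\<lambda>t. Mtot N m * t - (?S + m j * (t - y j)) - \<sigma> * (\<theta> j - t powr p) * t)
      has_real_derivative
        (Mtot N m - m j - \<sigma> * (\<theta> j - y j powr p) + \<sigma> * (p * y j powr (p - 1)) * y j))
      (at (y j))"
    using y_pos by (auto intro!: derivative_eq_intros simp: algebra_simps)
  moreover have "y j powr (p - 1) * y j = y j powr p" using y_pos by (simp add: powr_diff)
  moreover have "(\<lambda>t. Fmap N m \<theta> \<sigma> p (y(j := t)) i)
      = (\<lambda>t. Mtot N m * t - (?S + m j * (t - y j)) - \<sigma> * (\<theta> j - t powr p) * t)"
    unfolding Fmap_def sum_mult_fun_upd[OF j] using True by simp
  ultimately show ?thesis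
    using True assms by (simp add: Jmat_def dcoef_def algebra_simps)
next
  case False
  let ?S = "\<Sum>k<N. m k * y k"
  have "((\<lambda>t. Mtot N m * y i - (?S + m j * (t - y j)) - \<sigma> * (\<theta> i - y i powr p) * y i)
      has_real_derivative (- m j)) (at (y j))"
    by (auto intro!: derivative_eq_intros)
  moreover have "(\<lambda>t. Fmap N m \<theta> \<sigma> p (y(j := t)) i)
      = (\<lambda>t. Mtot N m * y i - (?S + m j * (t - y j)) - \<sigma> * (\<theta> i - y i powr p) * y i)"
    unfolding Fmap_def sum_mult_fun_upd[OF j] using False by simp
  ultimately show ?thesis using False assms by (simp add: Jmat_def)
qed

theorem mainTheorem12:
  fixes N :: nat and \<theta> m y :: "nat \<Rightarrow> real" and \<sigma> p :: real
  assumes \<theta>pos: "\<forall>i<N. \<theta> i > 0"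
    and mpos: "\<forall>i<N. m i > 0"
    and \<sigma>pos: "\<sigma> > 0"
    and ppos: "p > 0"
    and ypos: "\<forall>i<N. y i > 0"
    and zero: "\<forall>i<N. Fmap N m \<theta> \<sigma> p y i = 0"
  shows "(\<forall>i<N. dcoef N m \<theta> \<sigma> p y i > 0)
    \<and> (\<forall>i<N. \<forall>j<N.
          ((\<lambda>t. Fmap N m \<theta> \<sigma> p (y(j := t)) i) has_real_derivative
              (Jmat N m \<theta> \<sigma> p y $$ (i, j))) (at (y j)))
    \<and> (\<forall>k. 1 \<le> k \<and> k \<le> N \<longrightarrow> det (lead_sub k (Jmat N m \<theta> \<sigma> p y)) > 0)
    \<and> det (Jmat N m \<theta> \<sigma> p y) =
        (\<Prod>i<N. dcoef N m \<theta> \<sigma> p y i) *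
        (1 - (\<Sum>k<N. m k / dcoef N m \<theta> \<sigma> p y k))
    \<and> det (Jmat N m \<theta> \<sigma> p y) > 0"
proof -
  let ?d = "dcoef N m \<theta> \<sigma> p y"
  have d_pos: "\<forall>i<N. ?d i > 0"
    using dcoef_pos_at_zero mpos \<sigma>pos ppos ypos zero by blast
  have sum_less: "(\<Sum>k<N. m k / ?d k) < 1"
    using sum_div_dcoef_less_1 mpos \<sigma>pos ppos ypos zero by blast
  have m_nonneg: "\<forall>i<N. m i \<ge> 0" and d_nz: "\<forall>i<N. ?d i \<noteq> 0"
    using mpos d_pos by auto
  show ?thesis
    unfolding Jmat_eq_diag_minus_rank_one
    using d_pos ypos has_real_derivative_Fmap_partial[unfolded Jmat_eq_diag_minus_rank_one]
      leading_minor_diag_minus_rank_one_pos[OF d_pos m_nonneg sum_less]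
      det_diag_minus_rank_one[OF d_nz] det_diag_minus_rank_one_pos[OF d_pos sum_less]
    by auto
qed

end
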